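(* Let $((A,\cdot),N)$ be a Nijenhuis algebra and $((M,\triangleright,\triangleleft),N_M)$ a Nijenhuis bimodule over it. Then for every $n\ge0$ and every $f\in C^n_{\mathrm{Hoch}}(A;M)$ we have $d_{N,N_M}(\partial^{N,N_M}(f))=\partial^{N,N_M}(\delta_{\mathrm{Hoch}}(f))$.
   Context: Over a field of characteristic $0$. Nijenhuis algebra: associative $(A,\cdot)$ with linear $N$, $N(a)N(b)=N(N(a)b+aN(b)-N(ab))$. Nijenhuis bimodule: $A$-bimodule $(M,\triangleright,\triangleleft)$ with linear $N_M$ such that $N(a)\triangleright N_M(u)=N_M(N(a)\triangleright u+a\triangleright N_M(u)-N_M(a\triangleright u))$ and $N_M(u)\triangleleft N(a)=N_M(N_M(u)\triangleleft a+u\triangleleft N(a)-N_M(u\triangleleft a))$. $C^n_{\mathrm{Hoch}}(A;M)=\mathrm{Hom}(A^{\otimes n},M)$ ($C^0=M$), with $\delta_{\mathrm{Hoch}}(u)(a)=a\triangleright u-u\triangleleft a$ and, for $n\ge1$, $(\delta_{\mathrm{Hoch}}f)(a_1,\dots,a_{n+1})=a_1\triangleright f(a_2,\dots,a_{n+1})+\sum_{i=1}^n(-1)^if(a_1,\dots,a_ia_{i+1},\dots,a_{n+1})+(-1)^{n+1}f(a_1,\dots,a_n)\triangleleft a_{n+1}$. The map $d_{N,N_M}:\mathrm{Hom}(A^{\otimes n},M)\to\mathrm{Hom}(A^{\otimes n+1},M)$: $d_{N,N_M}(u)(a)=N(a)\triangleright u-u\triangleleft N(a)-N_M(a\triangleright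 u-u\triangleleft a)$ for $u\in M$; for $n\ge1$, $(d_{N,N_M}f)(a_1,\dots,a_{n+1})=N(a_1)\triangleright f(a_2,\dots,a_{n+1})-(-1)^nf(a_1,\dots,a_n)\triangleleft N(a_{n+1})+\sum_{i=1}^n(-1)^if(a_1,\dots,a_{i-1},N(a_i)a_{i+1}+a_iN(a_{i+1})-N(a_ia_{i+1}),\dots,a_{n+1})-N_M\big((\delta_{\mathrm{Hoch}}f)(a_1,\dots,a_{n+1})\big)$. The map $\partial^{N,N_M}:\mathrm{Hom}(A^{\otimes n},M)\to\mathrm{Hom}(A^{\otimes n},M)$: $\partial^{N,N_M}(u)=u$ for $u\in M$, and for $n\ge1$, $\partial^{N,N_M}(f)(a_1,\dots,a_n)=\sum_{S\subseteq\{1,\dots,n\}}(-1)^{|S|}N_M^{|S|}\big(f(b_1,\dots,b_n)\big)$ where $b_i=a_i$ if $i\in S$ and $b_i=N(a_i)$ if $i\notin S$. *)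

theory Defs
  imports Main "HOL.Vector_Spaces"
begin

text \<open>The bimodule M is a type 'm with scalar
  multiplication sM and actions lact (a \<triangleright> u) and ract (u \<triangleleft> a).\<close>

definition assoc_algebra :: "('k::field_char_0 \<Rightarrow> 'a::ring \<Rightarrow> 'a) \<Rightarrow> bool" where
  "assoc_algebra sA \<longleftrightarrow> Vector_Spaces.vector_space sA \<and>
     (\<forall>c a b. sA c (a * b) = sA c a * b \<and> sA c (a * b) = a * sA c b)"

definition nijenhuis_algebra :: "('k::field_char_0 \<Rightarrow> 'a::ring \<Rightarrow> 'a) \<Rightarrow> ('a \<Rightarrow> 'a) \<Rightarrow> bool" where
  "nijenhuis_algebra sA N \<longleftrightarrow> assoc_algebra sA \<and> Vector_Spaces.linear sA sA N \<and>
     (\<forall>a b. N a * N b = N (N a * b + a * N b - N (a * b)))"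

definition bimodule ::
  "('k::field_char_0 \<Rightarrow> 'a::ring \<Rightarrow> 'a) \<Rightarrow> ('k \<Rightarrow> 'm::ab_group_add \<Rightarrow> 'm) \<Rightarrow>
   ('a \<Rightarrow> 'm \<Rightarrow> 'm) \<Rightarrow> ('m \<Rightarrow> 'a \<Rightarrow> 'm) \<Rightarrow> bool" where
  "bimodule sA sM lact ract \<longleftrightarrow> assoc_algebra sA \<and> Vector_Spaces.vector_space sM \<and>
     (\<forall>u. Vector_Spaces.linear sA sM (\<lambda>a. lact a u)) \<and>
     (\<forall>a. Vector_Spaces.linear sM sM (\<lambda>u. lact a u)) \<and>
     (\<forall>u. Vector_Spaces.linear sA sM (\<lambda>a. ract u a)) \<and>
     (\<forall>a. Vector_Spaces.linear sM sM (\<lambda>u. ract u a)) \<and>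
     (\<forall>a b u. lact (a * b) u = lact a (lact b u)) \<and>
     (\<forall>a b u. ract (lact a u) b = lact a (ract u b)) \<and>
     (\<forall>a b u. ract u (a * b) = ract (ract u a) b)"

definition nijenhuis_bimodule ::
  "('k::field_char_0 \<Rightarrow> 'a::ring \<Rightarrow> 'a) \<Rightarrow> ('a \<Rightarrow> 'a) \<Rightarrow> ('k \<Rightarrow> 'm::ab_group_add \<Rightarrow> 'm) \<Rightarrow>
   ('a \<Rightarrow> 'm \<Rightarrow> 'm) \<Rightarrow> ('m \<Rightarrow> 'a \<Rightarrow> 'm) \<Rightarrow> ('m \<Rightarrow> 'm) \<Rightarrow> bool" where
  "nijenhuis_bimodule sA N sM lact ract NM \<longleftrightarrow> bimodule sA sM lact ract \<and>
     Vector_Spaces.linear sM sM NM \<and>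
     (\<forall>a u. lact (N a) (NM u) = NM (lact (N a) u + lact a (NM u) - NM (lact a u))) \<and>
     (\<forall>a u. ract (NM u) (N a) = NM (ract (NM u) a + ract u (N a) - NM (ract u a)))"

text \<open>An n-cochain f \<in> Hom(A^{\<otimes>n}, M) is represented as a function on lists; only its
  values on lists of length n matter.  For n = 0 the cochain is
  the element f [] of M.\<close>

definition multilinear ::
  "('k::field_char_0 \<Rightarrow> 'a::ab_group_add \<Rightarrow> 'a) \<Rightarrow> ('k \<Rightarrow> 'm::ab_group_add \<Rightarrow> 'm) \<Rightarrow> nat \<Rightarrow> ('a list \<Rightarrow> 'm) \<Rightarrow> bool" where
  "multilinear sA sM n f \<longleftrightarrow>
     (\<forall>as i c x y. length as = n \<longrightarrow> i < n \<longrightarrow>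
        f (as[i := sA c x + y]) = sM c (f (as[i := x])) + f (as[i := y]))"

definition sgn_pow :: "nat \<Rightarrow> 'm::ab_group_add \<Rightarrow> 'm" where
  "sgn_pow i x = (if even i then x else - x)"

text \<open>Hochschild coboundary of an n-cochain (inputs a_1..a_{n+1} are as!0..as!n).
  For n = 0 this is a \<triangleright> u - u \<triangleleft> a with u = f [].\<close>
definition hoch_delta ::
  "('a::ring \<Rightarrow> 'm::ab_group_add \<Rightarrow> 'm) \<Rightarrow> ('m \<Rightarrow> 'a \<Rightarrow> 'm) \<Rightarrow> nat \<Rightarrow> ('a list \<Rightarrow> 'm) \<Rightarrow> 'a list \<Rightarrow> 'm" where
  "hoch_delta lact ract n f as =
     lact (as ! 0) (f (drop 1 as))
     + (\<Sum>i = 1..n. sgn_pow i (f (take (i - 1) as @ [as ! (i - 1) * as ! i] @ drop (i + 1) as)))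
     + sgn_pow (n + 1) (ract (f (take n as)) (as ! n))"

definition d_NNM ::
  "('a::ring \<Rightarrow> 'a) \<Rightarrow> ('a \<Rightarrow> 'm::ab_group_add \<Rightarrow> 'm) \<Rightarrow> ('m \<Rightarrow> 'a \<Rightarrow> 'm) \<Rightarrow> ('m \<Rightarrow> 'm) \<Rightarrow>
   nat \<Rightarrow> ('a list \<Rightarrow> 'm) \<Rightarrow> 'a list \<Rightarrow> 'm" where
  "d_NNM N lact ract NM n f as =
     lact (N (as ! 0)) (f (drop 1 as))
     - sgn_pow n (ract (f (take n as)) (N (as ! n)))
     + (\<Sum>i = 1..n. sgn_pow i (f (take (i - 1) as @
          [N (as ! (i - 1)) * as ! i + as ! (i - 1) * N (as ! i) - N (as ! (i - 1) * as ! i)]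
          @ drop (i + 1) as)))
     - NM (hoch_delta lact ract n f as)"

text \<open>The map \<partial>^{N,N_M} on n-cochains (indices 0..n-1 here correspond to 1..n); for n = 0 it is
  the identity.\<close>
definition partial_NNM ::
  "('a \<Rightarrow> 'a) \<Rightarrow> ('m::ab_group_add \<Rightarrow> 'm) \<Rightarrow> nat \<Rightarrow> ('a list \<Rightarrow> 'm) \<Rightarrow> 'a list \<Rightarrow> 'm" where
  "partial_NNM N NM n f as =
     (\<Sum>S\<in>Pow {0..<n}. sgn_pow (card S)
        ((NM ^^ card S) (f (map (\<lambda>j. if j \<in> S then as ! j else N (as ! j)) [0..<n]))))"

end

theory Submission
  imports Defs
begin

(* Write the operator \<partial> as the alternating sum over subsets S of the argument positions of
   (-1)^|S| N_M^|S| f(b_S), where b_S applies N exactly at the positions outside S.  Splitting off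
   one position k expresses such a sum as (the sum with N applied at k) minus N_M (the sum with
   the plain argument at k).  For the two outer terms of \<delta>_Hoch f, the Nijenhuis bimodule
   identities say precisely that u \<mapsto> N(a) \<triangleright> u - N_M(a \<triangleright> u) and u \<mapsto> u \<triangleleft> N(a) - N_M(u \<triangleleft> a) commute
   with N_M, so these maps can be pulled out of the alternating sum.  For an inner term the two
   merged positions i, i+1 are split off; the Nijenhuis identity N(a)N(b) = N(a \<circ>_N b), with
   a \<circ>_N b = N(a)b + aN(b) - N(ab), and additivity of f in the merged slot recombine the four
   resulting sums into \<partial>f at a \<circ>_N b minus N_M(\<partial>f at ab), which is the inner term of d_{N,N_M}. *)

lemma sgn_pow_Suc: "sgn_pow (Suc i) x = - sgn_pow i x"
  by (simp add: sgn_pow_def)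

lemma additive_sgn_pow: "additive (sgn_pow i)"
  by unfold_locales (simp add: sgn_pow_def)

lemma additive_commute_sgn_pow: "additive g \<Longrightarrow> g (sgn_pow i x) = sgn_pow i (g x)"
  by (simp add: sgn_pow_def additive.minus)

lemma additive_funpow:
  fixes g :: "'m::ab_group_add \<Rightarrow> 'm"
  assumes "additive g"
  shows "additive (g ^^ k)"
proof (induction k)
  case 0
  show ?case by unfold_locales simp
next
  case (Suc k)
  then show ?case using assms by unfold_locales (simp add: additive.add)
qed

lemma funpow_commute: "(\<And>x. p (g x) = g (p x)) \<Longrightarrow> p ((g ^^ k) x) = (g ^^ k) (p x)"
  by (induction k) auto

lemma linear_imp_additive: "Vector_Spaces.linear s1 s2 f \<Longrightarrow> additive f"
  by (simp add: Vector_Spaces.linear_iff additive_def)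

definition alt_sum :: "('m::ab_group_add \<Rightarrow> 'm) \<Rightarrow> 'i set \<Rightarrow> ('i set \<Rightarrow> 'm) \<Rightarrow> 'm" where
  "alt_sum NM I F = (\<Sum>S\<in>Pow I. sgn_pow (card S) ((NM ^^ card S) (F S)))"

lemma alt_sum_cong: "(\<And>S. S \<subseteq> I \<Longrightarrow> F S = G S) \<Longrightarrow> alt_sum NM I F = alt_sum NM I G"
  unfolding alt_sum_def by (intro sum.cong refl) auto

lemma alt_sum_reindex:
  assumes "inj_on h I"
  shows "alt_sum NM (h ` I) F = alt_sum NM I (\<lambda>S. F (h ` S))"
proof -
  have "Pow (h ` I) = image h ` Pow I" by (rule image_Pow_surj[symmetric]) simp
  moreover have "inj_on (image h) (Pow I)" using assms by (rule inj_on_image_Pow)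
  ultimately show ?thesis
    unfolding alt_sum_def
    by (simp add: sum.reindex) (intro sum.cong refl, simp add: card_image inj_on_subset[OF assms])
qed

context
  fixes NM :: "'m::ab_group_add \<Rightarrow> 'm"
  assumes additive_NM: "additive NM"
begin

lemma alt_sum_commute:
  assumes "additive p" "\<And>x. p (NM x) = NM (p x)"
  shows "p (alt_sum NM I F) = alt_sum NM I (\<lambda>S. p (F S))"
  unfolding alt_sum_def additive.sum[OF assms(1)]
  by (intro sum.cong refl) (simp add: additive_commute_sgn_pow[OF assms(1)] funpow_commute[of p NM, OF assms(2)])

lemma alt_sum_NM: "NM (alt_sum NM I F) = alt_sum NM I (\<lambda>S. NM (F S))"
  by (rule alt_sum_commute) (auto simp: additive_NM)

lemma alt_sum_sgn_pow: "sgn_pow i (alt_sum NM I F) = alt_sum NM I (\<lambda>S. sgn_pow i (F S))"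
  by (rule alt_sum_commute) (auto simp: additive_sgn_pow additive_commute_sgn_pow additive_NM)

lemma alt_sum_add: "alt_sum NM I (\<lambda>S. F S + G S) = alt_sum NM I F + alt_sum NM I G"
  unfolding alt_sum_def
  by (simp add: additive.add[OF additive_funpow[OF additive_NM]] additive.add[OF additive_sgn_pow]
      sum.distrib)

lemma alt_sum_diff: "alt_sum NM I (\<lambda>S. F S - G S) = alt_sum NM I F - alt_sum NM I G"
  unfolding alt_sum_def
  by (simp add: additive.diff[OF additive_funpow[OF additive_NM]] additive.diff[OF additive_sgn_pow]
      sum_subtractf)

lemma alt_sum_sum: "alt_sum NM I (\<lambda>S. \<Sum>i\<in>A. F i S) = (\<Sum>i\<in>A. alt_sum NM I (F i))"
  unfolding alt_sum_def
  by (simp add: additive.sum[OF additive_funpow[OF additive_NM]] additive.sum[OF additive_sgn_pow]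
      sum.swap[of _ A])

lemma alt_sum_insert:
  assumes "finite I" "k \<notin> I"
  shows "alt_sum NM (insert k I) F = alt_sum NM I F - NM (alt_sum NM I (\<lambda>S. F (insert k S)))"
proof -
  have inj: "inj_on (insert k) (Pow I)" using assms(2) by (auto simp: inj_on_def)
  have disj: "Pow I \<inter> insert k ` Pow I = {}" using assms(2) by auto
  have card: "card (insert k S) = Suc (card S)" if "S \<in> Pow I" for S
    using that assms by (meson PowD card_insert_disjoint finite_subset subsetD)
  have "alt_sum NM (insert k I) F = alt_sum NM I F +
      (\<Sum>S\<in>Pow I. sgn_pow (card (insert k S)) ((NM ^^ card (insert k S)) (F (insert k S))))"
    unfolding alt_sum_def Pow_insert
    by (subst sum.union_disjoint) (use assms disj in \<open>auto simp: sum.reindex[OF inj]\<close>)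
  also have "\<dots> = alt_sum NM I F + (\<Sum>S\<in>Pow I. - NM (sgn_pow (card S) ((NM ^^ card S) (F (insert k S)))))"
    by (intro arg_cong2[where f = "(+)"] sum.cong refl)
      (simp add: card sgn_pow_Suc additive_commute_sgn_pow[OF additive_NM])
  finally show ?thesis
    unfolding alt_sum_def by (simp add: additive.sum[OF additive_NM] sum_negf)
qed

lemma alt_sum_insert_insert:
  assumes "finite I" "k \<notin> I" "l \<notin> I" "k \<noteq> l"
  shows "alt_sum NM (insert k (insert l I)) F = alt_sum NM I (\<lambda>S. F S - NM (F (insert l S))
     - NM (F (insert k S)) + NM (NM (F (insert k (insert l S)))))"
  using assms
  by (simp add: alt_sum_insert alt_sum_add alt_sum_diff alt_sum_NM additive.diff[OF additive_NM])

(* The hypothesis on P, Q is the shape of the Nijenhuis bimodule identities; it makes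
   u \<mapsto> P u - NM (Q u) commute with NM. *)
lemma alt_sum_compatible_pair:
  assumes "additive P" "additive Q" "\<And>u. P (NM u) = NM (P u + Q (NM u) - NM (Q u))"
  shows "alt_sum NM I (\<lambda>S. P (F S)) - NM (alt_sum NM I (\<lambda>S. Q (F S)))
         = P (alt_sum NM I F) - NM (Q (alt_sum NM I F))"
proof -
  let ?\<phi> = "\<lambda>u. P u - NM (Q u)"
  have "additive ?\<phi>"
    by unfold_locales (simp add: additive.add[OF assms(1)] additive.add[OF assms(2)]
        additive.add[OF additive_NM])
  moreover have "?\<phi> (NM u) = NM (?\<phi> u)" for u
    by (simp add: assms(3) additive.add[OF additive_NM] additive.diff[OF additive_NM])
  ultimately have "?\<phi> (alt_sum NM I F) = alt_sum NM I (\<lambda>S. ?\<phi> (F S))"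
    by (rule alt_sum_commute)
  then show ?thesis by (simp add: alt_sum_diff alt_sum_NM)
qed

end

(* partial_args N m S xs is the argument list b of the paper, with positions counted from 0. *)
definition partial_args :: "('a \<Rightarrow> 'a) \<Rightarrow> nat \<Rightarrow> nat set \<Rightarrow> 'a list \<Rightarrow> 'a list" where
  "partial_args N m S xs = map (\<lambda>j. if j \<in> S then xs ! j else N (xs ! j)) [0..<m]"

definition merge_with :: "('a \<Rightarrow> 'a \<Rightarrow> 'a) \<Rightarrow> nat \<Rightarrow> 'a list \<Rightarrow> 'a list" where
  "merge_with op p xs = take p xs @ [op (xs ! p) (xs ! Suc p)] @ drop (Suc (Suc p)) xs"

definition nijenhuis_mult :: "('a::ring \<Rightarrow> 'a) \<Rightarrow> 'a \<Rightarrow> 'a \<Rightarrow> 'a" where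
  "nijenhuis_mult N x y = N x * y + x * N y - N (x * y)"

definition skip_index :: "nat \<Rightarrow> nat \<Rightarrow> nat" where
  "skip_index p j = (if j < p then j else Suc j)"

lemma length_partial_args [simp]: "length (partial_args N m S xs) = m"
  by (simp add: partial_args_def)

lemma nth_partial_args [simp]:
  "j < m \<Longrightarrow> partial_args N m S xs ! j = (if j \<in> S then xs ! j else N (xs ! j))"
  by (simp add: partial_args_def)

lemma partial_args_insert_ge: "m \<le> j \<Longrightarrow> partial_args N m (insert j S) xs = partial_args N m S xs"
  by (intro nth_equalityI) auto

lemma partial_NNM_eq_alt_sum:
  "partial_NNM N NM n f xs = alt_sum NM {0..<n} (\<lambda>S. f (partial_args N n S xs))"
  by (simp add: partial_NNM_def alt_sum_def partial_args_def)

lemma drop_partial_args: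
  "length xs = Suc n \<Longrightarrow>
   drop 1 (partial_args N (Suc n) S xs) = partial_args N n {j. Suc j \<in> S} (drop 1 xs)"
  by (intro nth_equalityI) auto

lemma take_partial_args:
  "length xs = Suc n \<Longrightarrow> take n (partial_args N (Suc n) S xs) = partial_args N n S (take n xs)"
  by (intro nth_equalityI) auto

lemma partial_args_update_outside:
  "p \<notin> T \<Longrightarrow> p < length xs \<Longrightarrow> length xs = m \<Longrightarrow>
   partial_args N m T (xs[p := z]) = (partial_args N m T xs)[p := N z]"
  by (intro nth_equalityI) (auto simp: nth_list_update)

lemma partial_args_update_inside:
  "p < length xs \<Longrightarrow> length xs = m \<Longrightarrow>
   partial_args N m (insert p T) (xs[p := z]) = (partial_args N m T xs)[p := z]"
  by (intro nth_equalityI) (auto simp: nth_list_update)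

lemma length_merge_with [simp]: "length xs = Suc n \<Longrightarrow> p < n \<Longrightarrow> length (merge_with op p xs) = n"
  by (simp add: merge_with_def)

lemma nth_merge_with:
  "length xs = Suc n \<Longrightarrow> p < n \<Longrightarrow> j < n \<Longrightarrow> merge_with op p xs ! j =
   (if j < p then xs ! j else if j = p then op (xs ! p) (xs ! Suc p) else xs ! Suc j)"
  by (auto simp: merge_with_def nth_append min_def)

lemma merge_with_eq_update:
  "length xs = Suc n \<Longrightarrow> p < n \<Longrightarrow>
   merge_with op p xs = (merge_with op' p xs)[p := op (xs ! p) (xs ! Suc p)]"
  by (intro nth_equalityI) (auto simp: nth_merge_with nth_list_update)

lemma merge_with_partial_args:
  assumes "length xs = Suc n" "p < n" "\<forall>j<n. j \<noteq> p \<longrightarrow> (skip_index p j \<in> S \<longleftrightarrow> j \<in> T)"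
  shows "merge_with (*) p (partial_args N (Suc n) S xs) =
    (partial_args N n T (merge_with (*) p xs))[p :=
      (if p \<in> S then xs ! p else N (xs ! p)) * (if Suc p \<in> S then xs ! Suc p else N (xs ! Suc p))]"
proof (intro nth_equalityI)
  fix j
  assume "j < length (merge_with (*) p (partial_args N (Suc n) S xs))"
  then have j: "j < n" using assms by simp
  then have mem: "j \<noteq> p \<Longrightarrow> skip_index p j \<in> S \<longleftrightarrow> j \<in> T" using assms(3) by blast
  consider "j < p" | "j = p" | "p < j" by linarith
  then show "merge_with (*) p (partial_args N (Suc n) S xs) ! j = (partial_args N n T (merge_with (*) p xs))[p :=
      (if p \<in> S then xs ! p else N (xs ! p)) * (if Suc p \<in> S then xs ! Suc p else N (xs ! Suc p))] ! j"
    by cases (use assms j mem in \<open>auto simp: nth_merge_with nth_list_update skip_index_def\<close>)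
qed (use assms in simp)

lemma skip_index_image:
  assumes "p \<le> n"
  shows "skip_index p ` ({0..<n} - {p}) = {0..<Suc n} - {p, Suc p}"
proof
  show "skip_index p ` ({0..<n} - {p}) \<subseteq> {0..<Suc n} - {p, Suc p}"
    by (auto simp: skip_index_def)
  show "{0..<Suc n} - {p, Suc p} \<subseteq> skip_index p ` ({0..<n} - {p})"
  proof
    fix x
    assume x: "x \<in> {0..<Suc n} - {p, Suc p}"
    define y where "y = (if x < p then x else x - 1)"
    have "x = skip_index p y" "y \<in> {0..<n} - {p}"
      using x assms by (auto simp: y_def skip_index_def)
    then show "x \<in> skip_index p ` ({0..<n} - {p})" by blast
  qed
qed

lemma hoch_delta_eq_merge_with:
  "hoch_delta lact ract n f as = lact (as ! 0) (f (drop 1 as))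
     + (\<Sum>i = 1..n. sgn_pow i (f (merge_with (*) (i - 1) as)))
     + sgn_pow (n + 1) (ract (f (take n as)) (as ! n))"
  unfolding hoch_delta_def by (auto intro!: sum.cong simp: merge_with_def)

lemma d_NNM_eq_merge_with:
  "d_NNM N lact ract NM n g as = lact (N (as ! 0)) (g (drop 1 as))
     - sgn_pow n (ract (g (take n as)) (N (as ! n)))
     + (\<Sum>i = 1..n. sgn_pow i (g (merge_with (nijenhuis_mult N) (i - 1) as)))
     - NM (hoch_delta lact ract n g as)"
  unfolding d_NNM_def
  by (auto intro!: sum.cong simp: merge_with_def nijenhuis_mult_def)

context
  fixes NM :: "'m::ab_group_add \<Rightarrow> 'm"
  assumes additive_NM: "additive NM"
begin

lemma partial_NNM_add:
  "partial_NNM N NM m (\<lambda>xs. F xs + G xs) as = partial_NNM N NM m F as + partial_NNM N NM m G as"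
  by (simp add: partial_NNM_eq_alt_sum alt_sum_add[OF additive_NM])

lemma partial_NNM_sum:
  "partial_NNM N NM m (\<lambda>xs. \<Sum>i\<in>A. F i xs) as = (\<Sum>i\<in>A. partial_NNM N NM m (F i) as)"
  by (simp add: partial_NNM_eq_alt_sum alt_sum_sum[OF additive_NM])

lemma partial_NNM_sgn_pow:
  "partial_NNM N NM m (\<lambda>xs. sgn_pow i (F xs)) as = sgn_pow i (partial_NNM N NM m F as)"
  by (simp add: partial_NNM_eq_alt_sum alt_sum_sgn_pow[OF additive_NM])

lemma partial_NNM_left_term:
  assumes "\<And>a. additive (lact a)"
    and "\<And>a u. lact (N a) (NM u) = NM (lact (N a) u + lact a (NM u) - NM (lact a u))"
    and "length as = Suc n"
  shows "partial_NNM N NM (Suc n) (\<lambda>xs. lact (xs ! 0) (f (drop 1 xs))) as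
         = lact (N (as ! 0)) (partial_NNM N NM n f (drop 1 as))
           - NM (lact (as ! 0) (partial_NNM N NM n f (drop 1 as)))"
proof -
  define F where "F S = lact (partial_args N (Suc n) S as ! 0) (f (drop 1 (partial_args N (Suc n) S as)))"
    for S
  define G where "G = (\<lambda>T. f (partial_args N n T (drop 1 as)))"
  have "{0..<Suc n} = insert 0 (Suc ` {0..<n})" by (auto simp: image_iff)
  then have "partial_NNM N NM (Suc n) (\<lambda>xs. lact (xs ! 0) (f (drop 1 xs))) as
      = alt_sum NM (Suc ` {0..<n}) F - NM (alt_sum NM (Suc ` {0..<n}) (\<lambda>S. F (insert 0 S)))"
    unfolding partial_NNM_eq_alt_sum F_def by (simp only:) (rule alt_sum_insert[OF additive_NM]; auto)
  also have "\<dots> = alt_sum NM {0..<n} (\<lambda>T. F (Suc ` T))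
      - NM (alt_sum NM {0..<n} (\<lambda>T. F (insert 0 (Suc ` T))))"
    by (simp only: alt_sum_reindex[OF inj_on_subset[OF inj_Suc subset_UNIV]])
  also have "\<dots> = alt_sum NM {0..<n} (\<lambda>T. lact (N (as ! 0)) (G T))
      - NM (alt_sum NM {0..<n} (\<lambda>T. lact (as ! 0) (G T)))"
    by (simp add: F_def G_def drop_partial_args[OF assms(3), simplified] image_iff)
  also have "\<dots> = lact (N (as ! 0)) (alt_sum NM {0..<n} G) - NM (lact (as ! 0) (alt_sum NM {0..<n} G))"
    by (rule alt_sum_compatible_pair[OF additive_NM assms(1) assms(1) assms(2)])
  finally show ?thesis by (simp add: G_def partial_NNM_eq_alt_sum)
qed

lemma partial_NNM_right_term:
  assumes "\<And>a. additive (\<lambda>u. ract u a)"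
    and "\<And>a u. ract (NM u) (N a) = NM (ract (NM u) a + ract u (N a) - NM (ract u a))"
    and "length as = Suc n"
  shows "partial_NNM N NM (Suc n) (\<lambda>xs. ract (f (take n xs)) (xs ! n)) as
         = ract (partial_NNM N NM n f (take n as)) (N (as ! n))
           - NM (ract (partial_NNM N NM n f (take n as)) (as ! n))"
proof -
  define F where "F S = ract (f (take n (partial_args N (Suc n) S as))) (partial_args N (Suc n) S as ! n)"
    for S
  define G where "G = (\<lambda>T. f (partial_args N n T (take n as)))"
  have "{0..<Suc n} = insert n {0..<n}" by auto
  then have "partial_NNM N NM (Suc n) (\<lambda>xs. ract (f (take n xs)) (xs ! n)) as
      = alt_sum NM {0..<n} F - NM (alt_sum NM {0..<n} (\<lambda>T. F (insert n T)))"
    unfolding partial_NNM_eq_alt_sum F_def by (simp only:) (rule alt_sum_insert[OF additive_NM]; auto)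
  also have "alt_sum NM {0..<n} F = alt_sum NM {0..<n} (\<lambda>T. ract (G T) (N (as ! n)))"
    by (rule alt_sum_cong) (auto simp: F_def G_def take_partial_args assms(3))
  also have "alt_sum NM {0..<n} (\<lambda>T. F (insert n T)) = alt_sum NM {0..<n} (\<lambda>T. ract (G T) (as ! n))"
    by (simp add: F_def G_def take_partial_args partial_args_insert_ge assms(3))
  also have "alt_sum NM {0..<n} (\<lambda>T. ract (G T) (N (as ! n)))
      - NM (alt_sum NM {0..<n} (\<lambda>T. ract (G T) (as ! n)))
      = ract (alt_sum NM {0..<n} G) (N (as ! n)) - NM (ract (alt_sum NM {0..<n} G) (as ! n))"
    by (rule alt_sum_compatible_pair[OF additive_NM assms(1) assms(1)]) (simp add: assms(2) add.commute)
  finally show ?thesis by (simp add: G_def partial_NNM_eq_alt_sum)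
qed

lemma partial_NNM_update_split:
  assumes "length xs = n" "p < n"
  shows "partial_NNM N NM n f (xs[p := z])
         = alt_sum NM ({0..<n} - {p}) (\<lambda>T. f ((partial_args N n T xs)[p := N z]))
           - NM (alt_sum NM ({0..<n} - {p}) (\<lambda>T. f ((partial_args N n T xs)[p := z])))"
proof -
  define K where "K = {0..<n} - {p}"
  have "{0..<n} = insert p K" using assms(2) by (auto simp: K_def)
  then have "partial_NNM N NM n f (xs[p := z])
      = alt_sum NM K (\<lambda>T. f (partial_args N n T (xs[p := z])))
        - NM (alt_sum NM K (\<lambda>T. f (partial_args N n (insert p T) (xs[p := z]))))"
    unfolding partial_NNM_eq_alt_sum by (simp only:) (rule alt_sum_insert[OF additive_NM]; auto simp: K_def)
  also have "alt_sum NM K (\<lambda>T. f (partial_args N n T (xs[p := z])))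
      = alt_sum NM K (\<lambda>T. f ((partial_args N n T xs)[p := N z]))"
  proof (rule alt_sum_cong)
    fix T
    assume "T \<subseteq> K"
    then have "p \<notin> T" by (auto simp: K_def)
    then show "f (partial_args N n T (xs[p := z])) = f ((partial_args N n T xs)[p := N z])"
      using assms by (simp add: partial_args_update_outside)
  qed
  finally show ?thesis
    using assms by (simp add: K_def partial_args_update_inside)
qed

lemma partial_NNM_merge_split:
  assumes len: "length as = Suc n" and p: "p < n"
  shows "partial_NNM N NM (Suc n) (\<lambda>xs. f (merge_with (*) p xs)) as
    = alt_sum NM ({0..<n} - {p}) (\<lambda>T.
        f ((partial_args N n T (merge_with (*) p as))[p := N (as ! p) * N (as ! Suc p)])
      - NM (f ((partial_args N n T (merge_with (*) p as))[p := N (as ! p) * as ! Suc p]))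
      - NM (f ((partial_args N n T (merge_with (*) p as))[p := as ! p * N (as ! Suc p)]))
      + NM (NM (f ((partial_args N n T (merge_with (*) p as))[p := as ! p * as ! Suc p]))))"
proof -
  define K where "K = {0..<n} - {p}"
  define F where "F S = f (merge_with (*) p (partial_args N (Suc n) S as))" for S
  define \<Phi> where "\<Phi> T z = f ((partial_args N n T (merge_with (*) p as))[p := z])" for T z
  have inj: "inj (skip_index p)" by (auto simp: inj_def skip_index_def split: if_splits)
  have skip_p: "skip_index p j \<noteq> p" "skip_index p j = Suc p \<longleftrightarrow> j = p" for j
    by (auto simp: skip_index_def)
  have p_notin: "p \<notin> skip_index p ` A" and Suc_p_notin: "Suc p \<notin> skip_index p ` (A - {p})" for A
    by (auto simp: skip_index_def split: if_splits)
  have merged: "F (X \<union> skip_index p ` T) = \<Phi> T ((if p \<in> X then as ! p else N (as ! p))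
      * (if Suc p \<in> X then as ! Suc p else N (as ! Suc p)))"
    if "T \<subseteq> K" "X \<subseteq> {p, Suc p}" for T X
  proof -
    have "\<forall>j<n. j \<noteq> p \<longrightarrow> (skip_index p j \<in> X \<union> skip_index p ` T \<longleftrightarrow> j \<in> T)"
      using that skip_p inj by (auto simp: inj_image_mem_iff)
    moreover have "p \<notin> skip_index p ` T" "Suc p \<notin> skip_index p ` T"
      using p_notin Suc_p_notin[of T] that(1) by (auto simp: K_def Diff_idemp)
    ultimately show ?thesis
      unfolding F_def \<Phi>_def by (subst merge_with_partial_args[OF len p]) auto
  qed
  have "{0..<Suc n} = insert p (insert (Suc p) (skip_index p ` K))"
    using skip_index_image[of p n] p by (auto simp: K_def)
  then have "partial_NNM N NM (Suc n) (\<lambda>xs. f (merge_with (*) p xs)) as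
      = alt_sum NM (skip_index p ` K) (\<lambda>S. F S - NM (F (insert (Suc p) S))
          - NM (F (insert p S)) + NM (NM (F (insert p (insert (Suc p) S)))))"
    unfolding partial_NNM_eq_alt_sum F_def
    by (simp only:) (rule alt_sum_insert_insert[OF additive_NM]; use p_notin Suc_p_notin in \<open>auto simp: K_def\<close>)
  also have "\<dots> = alt_sum NM K (\<lambda>T. F (skip_index p ` T) - NM (F (insert (Suc p) (skip_index p ` T)))
          - NM (F (insert p (skip_index p ` T))) + NM (NM (F (insert p (insert (Suc p) (skip_index p ` T))))))"
    by (rule alt_sum_reindex) (rule inj_on_subset[OF inj subset_UNIV])
  also have "\<dots> = alt_sum NM K (\<lambda>T. \<Phi> T (N (as ! p) * N (as ! Suc p)) - NM (\<Phi> T (N (as ! p) * as ! Suc p))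
      - NM (\<Phi> T (as ! p * N (as ! Suc p))) + NM (NM (\<Phi> T (as ! p * as ! Suc p))))"
    using merged[of _ "{}"] merged[of _ "{Suc p}"] merged[of _ "{p}"] merged[of _ "{p, Suc p}"]
    by (intro alt_sum_cong) simp
  finally show ?thesis by (simp only: K_def \<Phi>_def)
qed

lemma partial_NNM_inner_term:
  assumes nij: "\<And>x y. N x * N y = N (nijenhuis_mult N x y)"
    and f_add: "\<And>L x y. length L = n \<Longrightarrow> f (L[p := x + y]) = f (L[p := x]) + f (L[p := y])"
    and len: "length as = Suc n" and p: "p < n"
  shows "partial_NNM N NM (Suc n) (\<lambda>xs. f (merge_with (*) p xs)) as
         = partial_NNM N NM n f (merge_with (nijenhuis_mult N) p as)
           - NM (partial_NNM N NM n f (merge_with (*) p as))"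
proof -
  define K where "K = {0..<n} - {p}"
  define a where "a = as ! p"
  define b where "b = as ! Suc p"
  define \<Phi> where "\<Phi> T z = f ((partial_args N n T (merge_with (*) p as))[p := z])" for T z
  have \<Phi>_diff: "\<Phi> T (x + y - w) = \<Phi> T x + \<Phi> T y - \<Phi> T w" for T x y w
  proof -
    have "\<Phi> T x + \<Phi> T y = \<Phi> T (x + y - w + w)"
      unfolding \<Phi>_def by (simp add: f_add)
    also have "\<dots> = \<Phi> T (x + y - w) + \<Phi> T w"
      unfolding \<Phi>_def by (rule f_add) simp
    finally show ?thesis by (simp add: algebra_simps)
  qed
  have partial_merge: "partial_NNM N NM n f (merge_with op p as)
      = alt_sum NM K (\<lambda>T. \<Phi> T (N (op a b))) - NM (alt_sum NM K (\<lambda>T. \<Phi> T (op a b)))" for op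
    using partial_NNM_update_split[where xs = "merge_with (*) p as" and z = "op a b"]
      merge_with_eq_update[OF len p, where op = op and op' = "(*)"] len p
    by (simp add: \<Phi>_def K_def a_def b_def)
  have "partial_NNM N NM n f (merge_with (nijenhuis_mult N) p as) - NM (partial_NNM N NM n f (merge_with (*) p as))
      = alt_sum NM K (\<lambda>T. \<Phi> T (N a * N b))
        - NM (alt_sum NM K (\<lambda>T. \<Phi> T (N a * b) + \<Phi> T (a * N b) - \<Phi> T (N (a * b))))
        - NM (alt_sum NM K (\<lambda>T. \<Phi> T (N (a * b))) - NM (alt_sum NM K (\<lambda>T. \<Phi> T (a * b))))"
    unfolding partial_merge nij[symmetric] by (simp add: nijenhuis_mult_def \<Phi>_diff)
  also have "\<dots> = alt_sum NM K (\<lambda>T. \<Phi> T (N a * N b) - NM (\<Phi> T (N a * b)) - NM (\<Phi> T (a * N b))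
          + NM (NM (\<Phi> T (a * b))))"
    by (simp add: alt_sum_add[OF additive_NM] alt_sum_diff[OF additive_NM] alt_sum_NM[OF additive_NM]
        additive.add[OF additive_NM] additive.diff[OF additive_NM])
  also have "\<dots> = partial_NNM N NM (Suc n) (\<lambda>xs. f (merge_with (*) p xs)) as"
    unfolding partial_NNM_merge_split[OF len p] by (simp only: K_def \<Phi>_def a_def b_def)
  finally show ?thesis ..
qed

lemma partial_NNM_hoch_delta:
  assumes nij: "\<And>x y. N x * N y = N (nijenhuis_mult N x y)"
    and lact: "\<And>a. additive (lact a)"
      "\<And>a u. lact (N a) (NM u) = NM (lact (N a) u + lact a (NM u) - NM (lact a u))"
    and ract: "\<And>a. additive (\<lambda>u. ract u a)"
      "\<And>a u. ract (NM u) (N a) = NM (ract (NM u) a + ract u (N a) - NM (ract u a))"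
    and f_add: "\<And>L p x y. length L = n \<Longrightarrow> p < n \<Longrightarrow> f (L[p := x + y]) = f (L[p := x]) + f (L[p := y])"
    and len: "length as = Suc n"
  shows "partial_NNM N NM (Suc n) (hoch_delta lact ract n f) as
         = d_NNM N lact ract NM n (partial_NNM N NM n f) as"
proof -
  define g where "g = partial_NNM N NM n f"
  have inner: "(\<Sum>i = 1..n. sgn_pow i (partial_NNM N NM (Suc n) (\<lambda>xs. f (merge_with (*) (i - 1) xs)) as))
      = (\<Sum>i = 1..n. sgn_pow i (g (merge_with (nijenhuis_mult N) (i - 1) as) - NM (g (merge_with (*) (i - 1) as))))"
    unfolding g_def
    by (intro sum.cong refl arg_cong[where f = "sgn_pow _"] partial_NNM_inner_term[OF nij f_add len]) auto
  have "partial_NNM N NM (Suc n) (hoch_delta lact ract n f) as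
      = partial_NNM N NM (Suc n) (\<lambda>xs. lact (xs ! 0) (f (drop 1 xs))) as
        + (\<Sum>i = 1..n. sgn_pow i (partial_NNM N NM (Suc n) (\<lambda>xs. f (merge_with (*) (i - 1) xs)) as))
        + sgn_pow (n + 1) (partial_NNM N NM (Suc n) (\<lambda>xs. ract (f (take n xs)) (xs ! n)) as)"
    by (simp add: hoch_delta_eq_merge_with[abs_def] partial_NNM_add partial_NNM_sum partial_NNM_sgn_pow)
  also have "\<dots> = (lact (N (as ! 0)) (g (drop 1 as)) - NM (lact (as ! 0) (g (drop 1 as))))
      + (\<Sum>i = 1..n. sgn_pow i (g (merge_with (nijenhuis_mult N) (i - 1) as) - NM (g (merge_with (*) (i - 1) as))))
      + sgn_pow (n + 1) (ract (g (take n as)) (N (as ! n)) - NM (ract (g (take n as)) (as ! n)))"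
    unfolding partial_NNM_left_term[where lact = lact and N = N, OF lact len]
      partial_NNM_right_term[where ract = ract and N = N, OF ract len] inner
    by (simp only: g_def)
  also have "\<dots> = d_NNM N lact ract NM n g as"
    by (simp add: d_NNM_eq_merge_with hoch_delta_eq_merge_with sum_subtractf sgn_pow_Suc
        additive.add[OF additive_NM] additive.diff[OF additive_NM] additive.minus[OF additive_NM]
        additive.sum[OF additive_NM] additive.diff[OF additive_sgn_pow] additive_commute_sgn_pow[OF additive_NM])
  finally show ?thesis by (simp only: g_def)
qed

end

lemma multilinear_update_add:
  assumes "Vector_Spaces.vector_space sA" "Vector_Spaces.vector_space sM"
    and "multilinear sA sM n f" "length L = n" "p < n"
  shows "f (L[p := x + y]) = f (L[p := x]) + f (L[p := y])"
  using assms(3-5) vector_space.vector_space_assms(4)[OF assms(1), of x]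
    vector_space.vector_space_assms(4)[OF assms(2)]
  unfolding multilinear_def by metis

theorem proposition3p11:
  fixes sA :: "'k::field_char_0 \<Rightarrow> 'a::ring \<Rightarrow> 'a"
    and N :: "'a \<Rightarrow> 'a"
    and sM :: "'k \<Rightarrow> 'm::ab_group_add \<Rightarrow> 'm"
    and lact :: "'a \<Rightarrow> 'm \<Rightarrow> 'm"
    and ract :: "'m \<Rightarrow> 'a \<Rightarrow> 'm"
    and NM :: "'m \<Rightarrow> 'm"
    and n :: nat
    and f :: "'a list \<Rightarrow> 'm"
    and as :: "'a list"
  assumes "nijenhuis_algebra sA N"
    and "nijenhuis_bimodule sA N sM lact ract NM"
    and "multilinear sA sM n f"
    and "length as = n + 1"
  shows "d_NNM N lact ract NM n (partial_NNM N NM n f) as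
         = partial_NNM N NM (n + 1) (hoch_delta lact ract n f) as"
proof -
  have vsA: "Vector_Spaces.vector_space sA" and nij: "\<And>x y. N x * N y = N (nijenhuis_mult N x y)"
    using assms(1) by (simp_all add: nijenhuis_algebra_def assoc_algebra_def nijenhuis_mult_def)
  have vsM: "Vector_Spaces.vector_space sM" and additive_NM: "additive NM"
    and lact: "\<And>a. additive (lact a)" "\<And>a u. lact (N a) (NM u) = NM (lact (N a) u + lact a (NM u) - NM (lact a u))"
    and ract: "\<And>a. additive (\<lambda>u. ract u a)" "\<And>a u. ract (NM u) (N a) = NM (ract (NM u) a + ract u (N a) - NM (ract u a))"
    using assms(2) unfolding nijenhuis_bimodule_def bimodule_def by (auto intro: linear_imp_additive)
  have len: "length as = Suc n" using assms(4) by simp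
  show ?thesis
    using partial_NNM_hoch_delta[where N = N and lact = lact and ract = ract and f = f,
        OF additive_NM nij lact ract multilinear_update_add[OF vsA vsM assms(3)] len]
    by simp
qed

end
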